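(* Let $X$ be a set and $\tau$ a Hausdorff topology on $I(X)$ making it a topological inverse semigroup. For $A\subseteq X$ let $R_A=\{f\circ 1_A: f\in I(X)\}$ with the subspace topology of $\tau$ and $r_A:I(X)\to R_A$, $r_A(f)=f\circ 1_A$. Suppose $r_A$ is an open map for every cofinite $A\subseteq X$. Let $(f_k)_{k\in\mathbb N}$ be a sequence in $I(X)$ and $f\in I(X)$ such that (i) $f_k\to f$ in $\tau_{pp}$, and (ii) there is a cofinite $A\subseteq X$ with $f_k\circ 1_A\to f\circ 1_A$ in $\tau$. Then $f_k\to f$ in $\tau$.
   Context: $I(X)$ is the set of all bijections $f:B\to C$ with $B,C\subseteq X$ (including the empty map), $\mathrm{dom}(f)=B$, $\mathrm{im}(f)=C$, with composition $\mathrm{dom}(f\circ g)=g^{-1}(\mathrm{dom}(f)\cap\mathrm{im}(g))$ and inversion $f\mapsto f^{-1}$. $1_A$ is the identity map on $A$. For $x,y\in X$: $v(x,y)=\{f: x\in\mathrm{dom}(f), f(x)=y\}$, $w_1(x)=\{f: x\notin\mathrm{dom}(f)\}$, $w_2(y)=\{f: y\notin\mathrm{im}(f)\}$; $\tau_{pp}$ is the topology generated by all these sets. A topological inverse semigroup has continuous multiplication and inversion. *)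

theory Defs
  imports "HOL-Analysis.Analysis"
begin

text \<open>The ground set X is the (arbitrary) type 'a. Partial bijections X to X are
  partial maps 'a to 'a option that are injective on their domain.\<close>

definition IX :: "('a \<rightharpoonup> 'a) set" where
  "IX = {f. inj_on f (dom f)}"

text \<open>Composition f o g (first g, then f): Map.map_comp, so that
  dom (f o g) = g^-1 (dom f inter im g).\<close>
definition pcomp :: "('a \<rightharpoonup> 'a) \<Rightarrow> ('a \<rightharpoonup> 'a) \<Rightarrow> ('a \<rightharpoonup> 'a)" where
  "pcomp f g = f \<circ>\<^sub>m g"

definition pinv :: "('a \<rightharpoonup> 'a) \<Rightarrow> ('a \<rightharpoonup> 'a)" where
  "pinv f = (\<lambda>y. if y \<in> ran f then Some (THE x. f x = Some y) else None)"

definition pid :: "'a set \<Rightarrow> ('a \<rightharpoonup> 'a)" where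
  "pid A = (\<lambda>x. if x \<in> A then Some x else None)"

definition v_set :: "'a \<Rightarrow> 'a \<Rightarrow> ('a \<rightharpoonup> 'a) set" where
  "v_set x y = {f \<in> IX. f x = Some y}"

definition w1_set :: "'a \<Rightarrow> ('a \<rightharpoonup> 'a) set" where
  "w1_set x = {f \<in> IX. x \<notin> dom f}"

definition w2_set :: "'a \<Rightarrow> ('a \<rightharpoonup> 'a) set" where
  "w2_set y = {f \<in> IX. y \<notin> ran f}"

definition tau_pp :: "('a \<rightharpoonup> 'a) topology" where
  "tau_pp = topology_generated_by
     ({v_set x y | x y. True} \<union> {w1_set x | x. True} \<union> {w2_set y | y. True})"

definition topological_inverse_semigroup_on_IX :: "('a \<rightharpoonup> 'a) topology \<Rightarrow> bool" where
  "topological_inverse_semigroup_on_IX T \<longleftrightarrow>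
     topspace T = IX \<and>
     continuous_map (prod_topology T T) T (\<lambda>(f, g). pcomp f g) \<and>
     continuous_map T T pinv"

definition R_set :: "'a set \<Rightarrow> ('a \<rightharpoonup> 'a) set" where
  "R_set A = {pcomp f (pid A) | f. f \<in> IX}"

end

theory Submission
  imports Defs
begin

text \<open>Let C be the finite complement of A. Pointwise convergence makes f_k agree with f
  on all of C for large k. Given a \<tau>-neighbourhood U of f, shrink it to the \<tau>-open set W
  of those u that agree with f on C \<inter> dom f and whose restriction to A \<union> dom f lies in U
  (the sets v(x, y) are \<tau>-open, being complements of preimages of the closed point \<emptyset>
  under u \<mapsto> 1_{y} \<circ> u \<circ> 1_{x}). Openness of r_A gives, for large k, some u \<in> W with
  u \<circ> 1_A = f_k \<circ> 1_A, and gluing this with the agreement on C shows that f_k is the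
  restriction of u to A \<union> dom f, hence lies in U.\<close>

lemma pcomp_pid_eq_restrict_map [simp]: "pcomp g (pid A) = g |` A"
  by (rule ext) (simp add: pcomp_def pid_def map_comp_def restrict_map_def)

lemma pid_in_IX: "pid A \<in> IX"
  by (auto simp: IX_def pid_def inj_on_def split: if_splits)

lemma restrict_map_in_R_set: "g \<in> IX \<Longrightarrow> g |` A \<in> R_set A"
  by (auto simp: R_set_def)

lemma topspace_eq_IX: "topological_inverse_semigroup_on_IX T \<Longrightarrow> topspace T = IX"
  by (simp add: topological_inverse_semigroup_on_IX_def)

lemma continuous_map_pcomp:
  assumes "topological_inverse_semigroup_on_IX T"
    and "continuous_map X T g" "continuous_map X T h"
  shows "continuous_map X T (\<lambda>x. pcomp (g x) (h x))"
proof -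
  have "continuous_map (prod_topology T T) T (\<lambda>(f, g). pcomp f g)"
    using assms(1) by (simp add: topological_inverse_semigroup_on_IX_def)
  from continuous_map_compose[OF continuous_map_paired[THEN iffD2, OF conjI[OF assms(2,3)]] this]
  show ?thesis
    by (simp add: o_def)
qed

lemma continuous_map_pcomp_const:
  assumes "topological_inverse_semigroup_on_IX T" "c \<in> IX"
  shows continuous_map_pcomp_const_right: "continuous_map T T (\<lambda>u. pcomp u c)"
    and continuous_map_pcomp_const_left: "continuous_map T T (\<lambda>u. pcomp c u)"
  using assms by (auto intro!: continuous_map_pcomp simp: topspace_eq_IX)

lemma continuous_map_restrict_map:
  "topological_inverse_semigroup_on_IX T \<Longrightarrow> continuous_map T T (\<lambda>u. u |` B)"
  using continuous_map_pcomp_const_right[OF _ pid_in_IX] by simp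

lemma openin_v_set:
  assumes "Hausdorff_space T" and S: "topological_inverse_semigroup_on_IX T"
  shows "openin T (v_set x y)"
proof -
  let ?\<phi> = "\<lambda>u. pcomp (pid {y}) (u |` {x})"
  have "continuous_map T T ?\<phi>"
    using continuous_map_compose[OF continuous_map_restrict_map[OF S]
        continuous_map_pcomp_const_left[OF S pid_in_IX]]
    by (simp add: o_def)
  moreover have "closedin T {Map.empty}"
    using closedin_Hausdorff_singleton[OF assms(1)] S
    by (simp add: topspace_eq_IX IX_def)
  ultimately have "closedin T {u \<in> topspace T. ?\<phi> u \<in> {Map.empty}}"
    using closedin_continuous_map_preimage by blast
  moreover have "?\<phi> u = Map.empty \<longleftrightarrow> u x \<noteq> Some y" for u
  proof
    assume "?\<phi> u = Map.empty"
    then have "?\<phi> u x = None"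
      by simp
    then show "u x \<noteq> Some y"
      by (auto simp: pcomp_def pid_def)
  next
    assume "u x \<noteq> Some y"
    then show "?\<phi> u = Map.empty"
      by (auto simp: pcomp_def pid_def map_comp_def restrict_map_def fun_eq_iff
          split: option.splits)
  qed
  ultimately have "closedin T {u \<in> topspace T. u x \<noteq> Some y}"
    by simp
  then have "openin T (topspace T - {u \<in> topspace T. u x \<noteq> Some y})"
    by (simp add: openin_diff)
  moreover have "topspace T - {u \<in> topspace T. u x \<noteq> Some y} = v_set x y"
    using S by (auto simp: v_set_def topspace_eq_IX)
  ultimately show ?thesis
    by simp
qed

lemma openin_agree_on_finite:
  assumes "Hausdorff_space T" "topological_inverse_semigroup_on_IX T"
    and "finite D" "D \<subseteq> dom f"
  shows "openin T {u \<in> topspace T. \<forall>x\<in>D. u x = f x}"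
proof -
  have "{u \<in> topspace T. \<forall>x\<in>D. u x = f x}
        = \<Inter> (insert (topspace T) ((\<lambda>x. v_set x (the (f x))) ` D))"
    using assms(2,4) by (auto simp: v_set_def topspace_eq_IX)
  moreover have "openin T (\<Inter> (insert (topspace T) ((\<lambda>x. v_set x (the (f x))) ` D)))"
    using assms(3) openin_v_set[OF assms(1,2)] by (intro openin_Inter) auto
  ultimately show ?thesis
    by simp
qed

lemma eventually_agree_on_finite:
  assumes "limitin tau_pp g f F" "f \<in> IX" "finite D"
  shows "eventually (\<lambda>k. \<forall>x\<in>D. g k x = f x) F"
proof (rule eventually_ball_finite[OF assms(3)], rule ballI)
  fix x
  show "eventually (\<lambda>k. g k x = f x) F"
  proof (cases "f x")
    case None
    have "openin tau_pp (w1_set x)"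
      unfolding tau_pp_def by (rule topology_generated_by_Basis) blast
    then have "eventually (\<lambda>k. g k \<in> w1_set x) F"
      using assms(1,2) None by (auto simp: limitin_def w1_set_def)
    then show ?thesis
      by (rule eventually_mono) (auto simp: w1_set_def None)
  next
    case (Some y)
    have "openin tau_pp (v_set x y)"
      unfolding tau_pp_def by (rule topology_generated_by_Basis) blast
    then have "eventually (\<lambda>k. g k \<in> v_set x y) F"
      using assms(1,2) Some by (auto simp: limitin_def v_set_def)
    then show ?thesis
      by (rule eventually_mono) (simp add: v_set_def Some)
  qed
qed

lemma eventually_in_image_of_open_map:
  assumes "open_map X Y r" "limitin Y (\<lambda>k. r (x k)) (r a) F" "openin X W" "a \<in> W"
  shows "eventually (\<lambda>k. \<exists>u\<in>W. r u = r (x k)) F"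
proof -
  have "openin Y (r ` W)"
    using assms(1,3) by (simp add: open_map_def)
  then have "eventually (\<lambda>k. r (x k) \<in> r ` W) F"
    using assms(2,4) by (auto simp: limitin_def)
  then show ?thesis
    by (rule eventually_mono) auto
qed

lemma restrict_map_glue:
  assumes "u |` A = g |` A" "\<forall>x\<in>-A. g x = f x" "\<forall>x\<in>-A \<inter> dom f. u x = f x"
  shows "u |` (A \<union> dom f) = g"
proof
  fix z
  show "(u |` (A \<union> dom f)) z = g z"
  proof (cases "z \<in> A")
    case True
    then show ?thesis
      using fun_cong[OF assms(1), of z] by simp
  next
    case False
    then show ?thesis
      using assms(2,3) by (cases "f z") (auto simp: domIff)
  qed
qed

theorem lemma6p4:
  fixes T :: "('a \<rightharpoonup> 'a) topology"
    and fk :: "nat \<Rightarrow> ('a \<rightharpoonup> 'a)" and f :: "'a \<rightharpoonup> 'a"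
  assumes "Hausdorff_space T"
    and "topological_inverse_semigroup_on_IX T"
    and "\<And>A. finite (UNIV - A) \<Longrightarrow>
           open_map T (subtopology T (R_set A)) (\<lambda>g. pcomp g (pid A))"
    and "\<And>k. fk k \<in> IX" and "f \<in> IX"
    and "limitin tau_pp fk f sequentially"
    and "\<exists>A. finite (UNIV - A) \<and>
           limitin T (\<lambda>k. pcomp (fk k) (pid A)) (pcomp f (pid A)) sequentially"
  shows "limitin T fk f sequentially"
proof -
  have ts: "topspace T = IX"
    using assms(2) by (rule topspace_eq_IX)
  obtain A where fin: "finite (- A)"
    and lim: "limitin T (\<lambda>k. fk k |` A) (f |` A) sequentially"
    using assms(7) by (auto simp: Compl_eq_Diff_UNIV)
  have agree: "eventually (\<lambda>k. \<forall>x\<in>-A. fk k x = f x) sequentially"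
    using eventually_agree_on_finite[OF assms(6,5) fin] .
  have restrict_open: "open_map T (subtopology T (R_set A)) (\<lambda>g. g |` A)"
    using assms(3)[of A] fin by (simp add: Compl_eq_Diff_UNIV)
  have limR: "limitin (subtopology T (R_set A)) (\<lambda>k. fk k |` A) (f |` A) sequentially"
    using lim assms(4,5) by (simp add: limitin_subtopology restrict_map_in_R_set)
  show ?thesis
    unfolding limitin_def
  proof (intro conjI allI impI)
    show "f \<in> topspace T"
      using assms(5) ts by simp
    fix U assume U: "openin T U \<and> f \<in> U"
    define W where "W = {u \<in> topspace T. u |` (A \<union> dom f) \<in> U}
                         \<inter> {u \<in> topspace T. \<forall>x\<in>-A \<inter> dom f. u x = f x}"
    have "f |` (A \<union> dom f) = f"
      by (rule ext) (simp add: restrict_map_def domIff)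
    then have "f \<in> W"
      using U ts assms(5) by (simp add: W_def)
    moreover have "openin T W"
      unfolding W_def using U fin
      by (intro openin_Int openin_continuous_map_preimage[OF continuous_map_restrict_map]
          openin_agree_on_finite assms(1,2)) (auto simp: dom_def)
    ultimately have "eventually (\<lambda>k. \<exists>u\<in>W. u |` A = fk k |` A) sequentially"
      using eventually_in_image_of_open_map[where x=fk and a=f, OF restrict_open limR] by simp
    with agree show "eventually (\<lambda>k. fk k \<in> U) sequentially"
      by eventually_elim (use restrict_map_glue in \<open>fastforce simp: W_def\<close>)
  qed
qed

end
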